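(* Let $\mathcal{E}=(E,\leq,\sharp)$ be a prime event structure, $C$ a configuration of $\mathcal{E}$, and $e,e'\in E$. Suppose there are processes $P_1,P_2,P_3,P_4$ with $\emptyset\triangleright\textsc{espsi}(\mathcal{E},C)\xrightarrow{\overline{e}e}P_1$, $\emptyset\triangleright P_1\xrightarrow{\overline{e'}e'}P_2$, $\emptyset\triangleright\textsc{espsi}(\mathcal{E},C)\xrightarrow{\overline{e'}e'}P_3$, $\emptyset\triangleright P_3\xrightarrow{\overline{e}e}P_4$, and $P_2=P_4$. Then $e\,||\,e'$ in $\mathcal{E}$.
   Context: A prime event structure is a triple $\mathcal{E}=(E,\leq,\sharp)$ where $E$ is a set of events (names from a nominal set), $\leq$ is a partial order on $E$ with $\{d\mid d\leq e\}$ finite for every $e$, and $\sharp$ is an irreflexive symmetric relation on $E$ with conflict heredity ($d\leq e$ and $d\sharp f$ imply $e\sharp f$). Two events are concurrent, $d\,||\,e$, iff none of $d\leq e$, $e\leq d$, $d\sharp e$ holds. A configuration is a finite, conflict-free, downward-closed subset of $E$. Psi-calculus fragment. Processes: assertion processes $(\!|\Psi|\!)$, output prefixes $\overline{M}\langle N\rangle.P$, case processes $\mathbf{case}\ \varphi_1:P_1,\dots,\varphi_n:P_n$, and parallel compositions (also of infinite families). Frames: $\mathcal{F}((\!|\Psi|\!))=\Psi$, $\mathcal{F}(P\mid Q)=\mathcal{F}(P)\otimes\mathcal{F}(Q)$ (composition over all components for families), and the frame of prefixed and case processes is the unit $\mathbf{1}$. Transitions $\Psi\triangleright P\xrightarrow{\alpha}P'$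 are generated by: (Out) if $\Psi\vdash M\leftrightarrow K$ then $\Psi\triangleright\overline{M}\langle N\rangle.P\xrightarrow{\overline{K}N}P$; (Case) if $\Psi\triangleright P_i\xrightarrow{\alpha}P'$ and $\Psi\vdash\varphi_i$ then $\Psi\triangleright\mathbf{case}\ \tilde\varphi:\tilde P\xrightarrow{\alpha}P'$; (Par) if $\Psi\otimes\mathcal{F}(Q)\triangleright P\xrightarrow{\alpha}P'$ then $\Psi\triangleright P\mid Q\xrightarrow{\alpha}P'\mid Q$, symmetrically for $Q$, and for a parallel family one component moves in context $\Psi$ composed with the frames of all other components, the others remaining unchanged. Assertion processes have no transitions. Event-psi instance over $E$: terms are elements of $E$; conditions are pairs $(L,R)$ of subsets of $E$; assertions are subsets of $E$; $\otimes=\cup$; $\mathbf{1}=\emptyset$; entailment: $\Psi\vdash(L,R)$ iff $L\subseteq\Psi$ and $\Psi\cap R=\emptyset$, and $\Psi\vdash a\leftrightarrow b$ iff $a=b$. Translation: $\textsc{espsi}(\mathcal{E},C)=\big|_{e\in E}P_e$ where $P_e=(\!|\{e\}|\!)$ if $e\in C$ and otherwise $P_e=\mathbf{case}\ \varphi_e:\overline{e}\langle e\rangle.(\!|\{e\}|\!)$, with $\varphi_e=(\{d\in E\mid d\leq e,\ d\neq e\},\{d\in E\mid d\sharp e\})$. Processes are compared as $E$-indexed parallel families. The paper writes the transition labelled $\overline{e}e$ simply as $\xrightarrow{e}$. *)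

theory Defs
  imports Main
begin

definition prime_es :: "'a set \<Rightarrow> ('a \<Rightarrow> 'a \<Rightarrow> bool) \<Rightarrow> ('a \<Rightarrow> 'a \<Rightarrow> bool) \<Rightarrow> bool" where
  "prime_es E leq cf \<longleftrightarrow>
     (\<forall>d e. leq d e \<longrightarrow> d \<in> E \<and> e \<in> E) \<and>
     (\<forall>e\<in>E. leq e e) \<and>
     (\<forall>d\<in>E. \<forall>e\<in>E. leq d e \<and> leq e d \<longrightarrow> d = e) \<and>
     (\<forall>c\<in>E. \<forall>d\<in>E. \<forall>e\<in>E. leq c d \<and> leq d e \<longrightarrow> leq c e) \<and>
     (\<forall>e\<in>E. finite {d. leq d e}) \<and>
     (\<forall>d e. cf d e \<longrightarrow> d \<in> E \<and> e \<in> E) \<and>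
     (\<forall>e. \<not> cf e e) \<and>
     (\<forall>d e. cf d e \<longrightarrow> cf e d) \<and>
     (\<forall>d e f. leq d e \<and> cf d f \<longrightarrow> cf e f)"

definition configuration :: "'a set \<Rightarrow> ('a \<Rightarrow> 'a \<Rightarrow> bool) \<Rightarrow> ('a \<Rightarrow> 'a \<Rightarrow> bool) \<Rightarrow> 'a set \<Rightarrow> bool" where
  "configuration E leq cf C \<longleftrightarrow>
     finite C \<and> C \<subseteq> E \<and> (\<forall>d\<in>C. \<forall>e\<in>C. \<not> cf d e) \<and>
     (\<forall>e\<in>C. \<forall>d. leq d e \<longrightarrow> d \<in> C)"

definition concurrent :: "('a \<Rightarrow> 'a \<Rightarrow> bool) \<Rightarrow> ('a \<Rightarrow> 'a \<Rightarrow> bool) \<Rightarrow> 'a \<Rightarrow> 'a \<Rightarrow> bool" where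
  "concurrent leq cf d e \<longleftrightarrow> \<not> leq d e \<and> \<not> leq e d \<and> \<not> cf d e"

type_synonym 'a cond = "'a set \<times> 'a set"

definition entails :: "'a set \<Rightarrow> 'a cond \<Rightarrow> bool" where
  "entails \<Psi> \<phi> \<longleftrightarrow> fst \<phi> \<subseteq> \<Psi> \<and> \<Psi> \<inter> snd \<phi> = {}"

definition chan_eq :: "'a set \<Rightarrow> 'a \<Rightarrow> 'a \<Rightarrow> bool" where
  "chan_eq \<Psi> a b \<longleftrightarrow> a = b"

datatype 'a proc =
    Assert "'a set"
  | Out 'a 'a "'a proc"
  | Case "('a cond \<times> 'a proc) list"
  | Par "'a proc" "'a proc"

datatype 'a label = OutL 'a 'a

fun frame :: "'a proc \<Rightarrow> 'a set" where
  "frame (Assert \<Psi>) = \<Psi>"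
| "frame (Out M N P) = {}"
| "frame (Case cs) = {}"
| "frame (Par P Q) = frame P \<union> frame Q"

inductive trans :: "'a set \<Rightarrow> 'a proc \<Rightarrow> 'a label \<Rightarrow> 'a proc \<Rightarrow> bool" where
  OutR: "chan_eq \<Psi> M K \<Longrightarrow> trans \<Psi> (Out M N P) (OutL K N) P"
| CaseR: "(\<phi>, P) \<in> set cs \<Longrightarrow> trans \<Psi> P \<alpha> P' \<Longrightarrow> entails \<Psi> \<phi> \<Longrightarrow> trans \<Psi> (Case cs) \<alpha> P'"
| ParL: "trans (\<Psi> \<union> frame Q) P \<alpha> P' \<Longrightarrow> trans \<Psi> (Par P Q) \<alpha> (Par P' Q)"
| ParR: "trans (\<Psi> \<union> frame P) Q \<alpha> Q' \<Longrightarrow> trans \<Psi> (Par P Q) \<alpha> (Par P Q')"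

type_synonym 'a family = "'a \<Rightarrow> 'a proc"

definition fam_trans :: "'a set \<Rightarrow> 'a set \<Rightarrow> 'a family \<Rightarrow> 'a label \<Rightarrow> 'a family \<Rightarrow> bool" where
  "fam_trans E \<Psi> F \<alpha> G \<longleftrightarrow>
     (\<exists>i\<in>E. \<exists>P'. trans (\<Psi> \<union> (\<Union>d\<in>E - {i}. frame (F d))) (F i) \<alpha> P' \<and> G = F(i := P'))"

definition cond_of :: "'a set \<Rightarrow> ('a \<Rightarrow> 'a \<Rightarrow> bool) \<Rightarrow> ('a \<Rightarrow> 'a \<Rightarrow> bool) \<Rightarrow> 'a \<Rightarrow> 'a cond" where
  "cond_of E leq cf e = ({d\<in>E. leq d e \<and> d \<noteq> e}, {d\<in>E. cf d e})"

definition espsi :: "'a set \<Rightarrow> ('a \<Rightarrow> 'a \<Rightarrow> bool) \<Rightarrow> ('a \<Rightarrow> 'a \<Rightarrow> bool) \<Rightarrow> 'a set \<Rightarrow> 'a family" where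
  "espsi E leq cf C = (\<lambda>e. if e \<in> C then Assert {e}
                           else Case [(cond_of E leq cf e, Out e e (Assert {e}))])"

end

theory Submission
  imports Defs
begin

text \<open>Every transition of the translation of a configuration C fires an event a \<notin> C whose
  causes lie in C and which conflicts with nothing in C, and the result is the translation of
  the configuration C \<union> {a}. Two interleavings of e and e' thus require e' to be enabled at
  C \<union> {e}, which rules out e \<sharp> e', and both e and e' to be enabled at C, which rules out
  causal dependence in either direction.\<close>

lemma trans_Assert_elim: "\<not> trans \<Psi> (Assert X) \<alpha> P'"
  by (auto elim: trans.cases)

lemma trans_Case_OutD:
  assumes "trans \<Psi> (Case [(\<phi>, Out M N Q)]) (OutL K L) P'"
  shows "K = M \<and> L = N \<and> entails \<Psi> \<phi> \<and> P' = Q"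
  using assms by cases (auto elim: trans.cases simp: chan_eq_def)

lemma entails_cond_of_iff:
  "entails \<Psi> (cond_of E leq cf a) \<longleftrightarrow>
     (\<forall>d\<in>E. leq d a \<and> d \<noteq> a \<longrightarrow> d \<in> \<Psi>) \<and> (\<forall>d\<in>E. cf d a \<longrightarrow> d \<notin> \<Psi>)"
  by (auto simp: entails_def cond_of_def)

lemma frame_espsi_others:
  assumes "C \<subseteq> E" and "a \<notin> C"
  shows "(\<Union>d\<in>E - {a}. frame (espsi E leq cf C d)) = C"
  using assms by (auto simp: espsi_def split: if_splits)

lemma espsi_fun_upd_Assert:
  "(espsi E leq cf C)(a := Assert {a}) = espsi E leq cf (insert a C)"
  by (auto simp: espsi_def)

lemma fam_trans_espsi:
  assumes "C \<subseteq> E"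
    and "fam_trans E \<Psi> (espsi E leq cf C) (OutL a b) G"
  shows "a \<in> E - C" and "entails (\<Psi> \<union> C) (cond_of E leq cf a)"
    and "G = espsi E leq cf (insert a C)"
proof -
  obtain i P' where "i \<in> E" and G: "G = (espsi E leq cf C)(i := P')"
    and step: "trans (\<Psi> \<union> (\<Union>d\<in>E - {i}. frame (espsi E leq cf C d)))
                 (espsi E leq cf C i) (OutL a b) P'"
    using assms(2) by (auto simp: fam_trans_def)
  have "i \<notin> C"
    using step by (auto simp: espsi_def trans_Assert_elim)
  with step have "trans (\<Psi> \<union> C) (Case [(cond_of E leq cf i, Out i i (Assert {i}))]) (OutL a b) P'"
    by (simp add: frame_espsi_others[OF assms(1)]) (simp add: espsi_def)
  then have "a = i" and "P' = Assert {i}" and "entails (\<Psi> \<union> C) (cond_of E leq cf i)"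
    by (auto dest: trans_Case_OutD)
  with \<open>i \<in> E\<close> \<open>i \<notin> C\<close> G show "a \<in> E - C" and "entails (\<Psi> \<union> C) (cond_of E leq cf a)"
    and "G = espsi E leq cf (insert a C)"
    by (simp_all add: espsi_fun_upd_Assert)
qed

theorem mainTheorem4:
  fixes E :: "'a set" and leq cf :: "'a \<Rightarrow> 'a \<Rightarrow> bool" and C :: "'a set"
    and e e' :: 'a and P1 P2 P3 P4 :: "'a family"
  assumes "prime_es E leq cf"
    and "configuration E leq cf C"
    and "e \<in> E" and "e' \<in> E"
    and "fam_trans E {} (espsi E leq cf C) (OutL e e) P1"
    and "fam_trans E {} P1 (OutL e' e') P2"
    and "fam_trans E {} (espsi E leq cf C) (OutL e' e') P3"
    and "fam_trans E {} P3 (OutL e e) P4"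
    and "P2 = P4"
  shows "concurrent leq cf e e'"
proof -
  have "C \<subseteq> E"
    using assms(2) by (simp add: configuration_def)
  note first_e = fam_trans_espsi[OF this assms(5)]
  note first_e' = fam_trans_espsi[OF \<open>C \<subseteq> E\<close> assms(7)]
  have "insert e C \<subseteq> E"
    using \<open>C \<subseteq> E\<close> assms(3) by simp
  note then_e' = fam_trans_espsi[OF this assms(6)[unfolded first_e(3)]]
  have "\<not> cf e e'"
    using then_e'(2) assms(3) by (auto simp: entails_cond_of_iff)
  moreover have "\<not> leq e e'"
    using first_e'(2) first_e(1) then_e'(1) assms(3) by (auto simp: entails_cond_of_iff)
  moreover have "\<not> leq e' e"
    using first_e(2) first_e'(1) then_e'(1) assms(4) by (auto simp: entails_cond_of_iff)
  ultimately show ?thesis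
    by (simp add: concurrent_def)
qed

end
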